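(* Let $T=(T_t)_{t\ge 0}$ be a subordinator with Laplace exponent $\phi$, i.e. $\mathbb{E}e^{-\lambda T_t}=e^{-t\phi(\lambda)}$ for $\lambda>0$, and set $H(\lambda)=\phi(\lambda)-\lambda\phi'(\lambda)$ for $\lambda>0$. If $H$ varies regularly at $0$ (at $\infty$, respectively) with index $\gamma\in[0,2)$, then \[ \mathbb{P}(T_t\ge r)\sim \frac{1}{\Gamma(2-\gamma)}\, t\,H(r^{-1}),\qquad r\to\infty\ (r\to 0,\text{ resp.})\ \text{ and }\ t\frac{\phi(r^{-1})^2}{H(r^{-1})}\to 0 . \]
   Context: A subordinator is a non-decreasing Lévy process; its Laplace exponent $\phi:(0,\infty)\to(0,\infty)$ has the form $\phi(\lambda)=b\lambda+\int_{(0,\infty)}(1-e^{-\lambda s})\mu(ds)$ with $b\ge0$ and $\int(1\wedge s)\mu(ds)<\infty$. A function $\ell:(0,\infty)\to(0,\infty)$ varies regularly at $\infty$ (at $0$) with index $\alpha$ if $\ell(\lambda s)/\ell(s)\to\lambda^\alpha$ as $s\to\infty$ ($s\to0$) for every $\lambda>0$. Notation: for functions $f,g,h$ of $(t,r)\in(0,\infty)^2$, "$f(t,r)\sim g(t,r)$, $r\to a$ and $h(t,r)\to 0$" means $\lim f(t,r)/g(t,r)=1$ where the limit is taken jointly as $r\to a$ and $h(t,r)\to0$ (i.e. for every $\varepsilon>0$ there is a neighbourhood $U$ of $a$ and $\delta>0$ such that $|f/g-1|<\varepsilon$ whenever $r\in U$ and $h(t,r)<\delta$). *)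

theory Defs
  imports "HOL-Probability.Probability"
begin

definition indep_increments :: "'a measure \<Rightarrow> (real \<Rightarrow> 'a \<Rightarrow> real) \<Rightarrow> bool" where
  "indep_increments M T \<longleftrightarrow>
     (\<forall>ts::real list. sorted ts \<and> (\<forall>x\<in>set ts. 0 \<le> x) \<longrightarrow>
        prob_space.indep_vars M (\<lambda>_. borel)
          (\<lambda>i \<omega>. T (ts ! Suc i) \<omega> - T (ts ! i) \<omega>) {..<length ts - 1})"

definition stationary_increments :: "'a measure \<Rightarrow> (real \<Rightarrow> 'a \<Rightarrow> real) \<Rightarrow> bool" where
  "stationary_increments M T \<longleftrightarrow>
     (\<forall>s t. 0 \<le> s \<longrightarrow> 0 \<le> t \<longrightarrow>
        distr M borel (\<lambda>\<omega>. T (s + t) \<omega> - T s \<omega>) = distr M borel (T t))"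

definition subordinator :: "'a measure \<Rightarrow> (real \<Rightarrow> 'a \<Rightarrow> real) \<Rightarrow> bool" where
  "subordinator M T \<longleftrightarrow>
     prob_space M \<and>
     (\<forall>t\<ge>0. T t \<in> borel_measurable M) \<and>
     (\<forall>\<omega>\<in>space M. T 0 \<omega> = 0 \<and> mono_on {0..} (\<lambda>t. T t \<omega>) \<and>
        (\<forall>t\<ge>0. continuous (at_right t) (\<lambda>t. T t \<omega>))) \<and>
     indep_increments M T \<and> stationary_increments M T"

definition laplace_exponent :: "'a measure \<Rightarrow> (real \<Rightarrow> 'a \<Rightarrow> real) \<Rightarrow> (real \<Rightarrow> real) \<Rightarrow> bool" where
  "laplace_exponent M T \<phi> \<longleftrightarrow>
     (\<forall>t\<ge>0. \<forall>l>0. (\<integral>\<omega>. exp (- l * T t \<omega>) \<partial>M) = exp (- t * \<phi> l))"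

definition regularly_varying :: "real filter \<Rightarrow> (real \<Rightarrow> real) \<Rightarrow> real \<Rightarrow> bool" where
  "regularly_varying F L \<alpha> \<longleftrightarrow>
     (\<forall>s>0. L s > 0) \<and>
     (\<forall>c>0. ((\<lambda>s. L (c * s) / L s) \<longlongrightarrow> c powr \<alpha>) F)"

text \<open>f(t,r) \<sim> g(t,r) jointly as r \<rightarrow> a (along F) and h(t,r) \<rightarrow> 0, with t,r \<in> (0,\<infinity>):
for every eps > 0 there are a neighbourhood of a (an eventually-set of F) and
delta > 0 such that |f/g - 1| < eps whenever r lies in it and |h(t,r)| < delta.\<close>

definition joint_asymp ::
  "real filter \<Rightarrow> (real \<Rightarrow> real \<Rightarrow> real) \<Rightarrow> (real \<Rightarrow> real \<Rightarrow> real) \<Rightarrow> (real \<Rightarrow> real \<Rightarrow> real) \<Rightarrow> bool" where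
  "joint_asymp F f g h \<longleftrightarrow>
     (\<forall>\<epsilon>>0. \<exists>\<delta>>0. \<forall>\<^sub>F r in F. \<forall>t>0. r > 0 \<longrightarrow> \<bar>h t r\<bar> < \<delta> \<longrightarrow>
        \<bar>f t r / g t r - 1\<bar> < \<epsilon>)"

end

theory Submission
  imports Defs
begin

text \<open>
  Let kappa(u) = 1 - (1 + u) exp(-u), the distribution function of the Gamma(2,1) law. The Laplace
  transform gives E kappa(l T_t) = 1 - exp(-x) - y exp(-x) with x = t phi(l) and y = t l phi'(l),
  which is x - y = t H(l) up to an error 2 x^2. So for a kernel sum K(u) = sum_i q_i kappa((i+1) u),
  regular variation of H gives E K(T_t / r) / (t H(1/r)) --> sum_i q_i (i+1)^gamma as long as
  t phi(1/r)^2 / H(1/r) --> 0.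

  The Tauberian step squeezes the indicator of [1, oo) between two kernel sums. As kappa(c u) / c^2
  has derivative u exp(-c u), a kernel sum is the primitive of s times an exponential sum
  sum_i p_i exp(-(i+1) s); by Stone-Weierstrass in exp(-s) such sums approximate a narrow trapezoid
  around s = 1, and integral_0^oo s^(1-gamma) exp(-c s) ds = Gamma(2-gamma) c^(gamma-2) shows that the
  resulting weights sum_i q_i (i+1)^gamma are within epsilon of 1 / Gamma(2-gamma).
\<close>

section \<open>The kernel and exponential estimates\<close>

definition gamma2_cdf :: "real \<Rightarrow> real" where
  "gamma2_cdf u = 1 - (1 + u) * exp (- u)"

lemma gamma2_cdf_nonneg: "0 \<le> u \<Longrightarrow> 0 \<le> gamma2_cdf u"
  using exp_ge_add_one_self[of u] by (simp add: gamma2_cdf_def exp_minus field_simps)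

lemma gamma2_cdf_le_1: "0 \<le> u \<Longrightarrow> gamma2_cdf u \<le> 1"
  by (simp add: gamma2_cdf_def)

lemma borel_measurable_gamma2_cdf [measurable]: "gamma2_cdf \<in> borel_measurable borel"
  unfolding gamma2_cdf_def[abs_def] by measurable

lemma gamma2_cdf_0 [simp]: "gamma2_cdf 0 = 0"
  by (simp add: gamma2_cdf_def)

lemma has_real_derivative_gamma2_cdf_scaled:
  assumes "c \<noteq> 0"
  shows "((\<lambda>x. gamma2_cdf (c * x) / c\<^sup>2) has_real_derivative x * exp (- (c * x))) (at x)"
proof -
  have "((\<lambda>x. 1 - (1 + c * x) * exp (- (c * x))) has_real_derivative c\<^sup>2 * (x * exp (- (c * x)))) (at x)"
    by (rule derivative_eq_intros refl)+ (simp add: algebra_simps power2_eq_square)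
  from DERIV_cdivide[OF this, of "c\<^sup>2"] show ?thesis
    using assms by (simp add: gamma2_cdf_def)
qed

lemma abs_exp_minus_one_minus_le: "\<bar>exp x - 1 - x\<bar> \<le> exp \<bar>x\<bar> * x\<^sup>2 / 2" for x :: real
proof -
  obtain t where t: "\<bar>t\<bar> \<le> \<bar>x\<bar>" "exp x = (\<Sum>m<2. x ^ m / fact m) + exp t / fact 2 * x ^ 2"
    using Maclaurin_exp_le[of x 2] by blast
  then have "\<bar>exp x - 1 - x\<bar> = exp t / 2 * x\<^sup>2"
    by (simp add: numeral_2_eq_2)
  also have "\<dots> \<le> exp \<bar>x\<bar> / 2 * x\<^sup>2"
    using t(1) by (intro mult_right_mono) auto
  finally show ?thesis by simp
qed

lemma mult_exp_minus_le: "0 \<le> x \<Longrightarrow> 0 < a \<Longrightarrow> x * exp (- (a * x)) \<le> 1 / a" for x a :: real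
proof -
  assume "0 \<le> x" "0 < a"
  moreover have "a * x \<le> exp (a * x)"
    using exp_ge_add_one_self[of "a * x"] by linarith
  ultimately show ?thesis by (simp add: exp_minus field_simps)
qed

lemma square_mult_exp_minus_le: "0 \<le> x \<Longrightarrow> 0 < a \<Longrightarrow> x\<^sup>2 * exp (- (a * x)) \<le> 2 / a\<^sup>2" for x a :: real
proof -
  assume x: "0 \<le> x" and a: "0 < a"
  have "(a * x)\<^sup>2 / 2 \<le> exp (a * x)"
    using exp_lower_Taylor_quadratic[of "a * x"] x a by (smt (verit) mult_nonneg_nonneg)
  then show ?thesis
    using a by (simp add: exp_minus field_simps power_mult_distrib)
qed

lemma abs_exp_second_difference_le:
  fixes x l h :: real
  assumes x: "0 \<le> x" and l: "0 < l" and h: "\<bar>h\<bar> \<le> l / 2"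
  shows "\<bar>exp (- (l + h) * x) - exp (- l * x) + h * (x * exp (- l * x))\<bar> \<le> 4 * h\<^sup>2 / l\<^sup>2"
proof -
  have decay: "exp (- l * x) * exp \<bar>- h * x\<bar> \<le> exp (- ((l / 2) * x))"
    using mult_right_mono[OF h x] x by (simp add: abs_mult flip: exp_add)
  have "exp (- (l + h) * x) - exp (- l * x) + h * (x * exp (- l * x))
      = exp (- l * x) * (exp (- h * x) - 1 - (- h * x))"
    by (simp add: algebra_simps flip: exp_add)
  then have "\<bar>exp (- (l + h) * x) - exp (- l * x) + h * (x * exp (- l * x))\<bar>
      = exp (- l * x) * \<bar>exp (- h * x) - 1 - (- h * x)\<bar>"
    by (simp add: abs_mult)
  also have "\<dots> \<le> exp (- l * x) * (exp \<bar>- h * x\<bar> * (- h * x)\<^sup>2 / 2)"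
    by (intro mult_left_mono abs_exp_minus_one_minus_le) auto
  also have "\<dots> = (exp (- l * x) * exp \<bar>- h * x\<bar>) * x\<^sup>2 * (h\<^sup>2 / 2)"
    by (simp add: power_mult_distrib)
  also have "\<dots> \<le> exp (- ((l / 2) * x)) * x\<^sup>2 * (h\<^sup>2 / 2)"
    by (intro mult_right_mono decay) auto
  also have "\<dots> = (x\<^sup>2 * exp (- ((l / 2) * x))) * (h\<^sup>2 / 2)"
    by simp
  also have "\<dots> \<le> (2 / (l / 2)\<^sup>2) * (h\<^sup>2 / 2)"
    by (intro mult_right_mono square_mult_exp_minus_le x) (use l in auto)
  also have "\<dots> = 4 * h\<^sup>2 / l\<^sup>2"
    using l by (simp add: field_simps power2_eq_square)
  finally show ?thesis .
qed

lemma abs_one_minus_exp_minus_le: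
  fixes x y :: real
  assumes "0 \<le> y" "y \<le> x"
  shows "\<bar>1 - exp (- x) - y * exp (- x) - (x - y)\<bar> \<le> 2 * x\<^sup>2"
proof -
  have x: "0 \<le> x" using assms by simp
  have lower: "1 - x \<le> exp (- x)"
    using exp_ge_add_one_self[of "- x"] by simp
  have q: "1 + x + x\<^sup>2 / 2 \<le> exp x"
    using exp_lower_Taylor_quadratic[OF x] .
  have qpos: "0 < 1 + x + x\<^sup>2 / 2"
    using x by (simp add: add_pos_nonneg)
  have "exp (- x) \<le> 1 / (1 + x + x\<^sup>2 / 2)"
    using q qpos by (simp add: exp_minus inverse_eq_divide divide_left_mono)
  also have "\<dots> \<le> 1 - x + x\<^sup>2 / 2"
  proof -
    have "1 \<le> (1 + x + x\<^sup>2 / 2) * (1 - x + x\<^sup>2 / 2)"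
      using x by (simp add: algebra_simps power2_eq_square power4_eq_xxxx)
    then show ?thesis using qpos by (simp add: field_simps)
  qed
  finally have upper: "exp (- x) \<le> 1 - x + x\<^sup>2 / 2" .
  have "y * (1 - exp (- x)) \<le> x * x"
    using assms lower by (intro mult_mono) auto
  moreover have "0 \<le> y * (1 - exp (- x))"
    using assms by simp
  moreover have "1 - exp (- x) - y * exp (- x) - (x - y) = (1 - exp (- x) - x) + y * (1 - exp (- x))"
    by (simp add: algebra_simps)
  ultimately show ?thesis
    using lower upper x by (simp add: power2_eq_square abs_le_iff)
qed

section \<open>Exponential sums and kernel sums\<close>

definition exp_sum :: "(nat \<Rightarrow> real) \<Rightarrow> nat \<Rightarrow> real \<Rightarrow> real" where
  "exp_sum p m s = (\<Sum>i\<le>m. p i * exp (- ((real i + 1) * s)))"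

definition kernel_sum :: "(nat \<Rightarrow> real) \<Rightarrow> nat \<Rightarrow> real \<Rightarrow> real" where
  "kernel_sum q m x = (\<Sum>i\<le>m. q i * gamma2_cdf ((real i + 1) * x))"

lemma exp_sum_uminus: "exp_sum (\<lambda>i. - p i) m s = - exp_sum p m s"
  by (simp add: exp_sum_def sum_negf)

lemma kernel_sum_cmult: "kernel_sum (\<lambda>i. c * q i) m x = c * kernel_sum q m x"
  by (simp add: kernel_sum_def sum_distrib_left mult.assoc)

lemma kernel_sum_0 [simp]: "kernel_sum q m 0 = 0"
  by (simp add: kernel_sum_def)

lemma has_real_derivative_kernel_sum:
  "(kernel_sum (\<lambda>i. p i / (real i + 1)\<^sup>2) m has_real_derivative x * exp_sum p m x) (at x)"
proof -
  have "((\<lambda>x. \<Sum>i\<le>m. p i * (gamma2_cdf ((real i + 1) * x) / (real i + 1)\<^sup>2)) has_real_derivative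
        (\<Sum>i\<le>m. p i * (x * exp (- ((real i + 1) * x))))) (at x)"
    by (intro DERIV_sum DERIV_cmult has_real_derivative_gamma2_cdf_scaled) auto
  then show ?thesis
    unfolding kernel_sum_def[abs_def] exp_sum_def by (simp add: sum_distrib_left mult_ac)
qed

lemma kernel_sum_has_integral:
  assumes "a \<le> b"
  shows "((\<lambda>s. s * exp_sum p m s) has_integral
           kernel_sum (\<lambda>i. p i / (real i + 1)\<^sup>2) m b - kernel_sum (\<lambda>i. p i / (real i + 1)\<^sup>2) m a) {a..b}"
  by (rule fundamental_theorem_of_calculus[OF assms])
     (auto intro!: DERIV_subset[OF has_real_derivative_kernel_sum]
           simp: has_real_derivative_iff_has_vector_derivative[symmetric])

lemma has_integral_powr_exp_scaled:
  fixes a c :: real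
  assumes a: "a > 0" and c: "c > 0"
  shows "((\<lambda>s. s powr (a - 1) * exp (- (c * s))) has_integral (Gamma a * c powr (- a))) {0..}"
proof -
  define f where "f t = indicator {0..} t * t powr (a - 1) / exp t" for t :: real
  have fm: "f \<in> borel_measurable borel" unfolding f_def by measurable
  have "ennreal (Gamma a) = (\<integral>\<^sup>+t. ennreal (f t) \<partial>lborel)"
    using Gamma_conv_nn_integral_real[OF a] unfolding f_def by simp
  also have "\<dots> = ennreal \<bar>c\<bar> * (\<integral>\<^sup>+x. ennreal (f (0 + c * x)) \<partial>lborel)"
    by (rule nn_integral_real_affine) (use fm c in auto)
  finally have G1: "ennreal (Gamma a) = ennreal c * (\<integral>\<^sup>+x. ennreal (f (c * x)) \<partial>lborel)"
    using c by simp
  define g where "g x = indicator {0..} x * (x powr (a - 1) * exp (- (c * x)))" for x :: real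
  have fg: "f (c * x) = c powr (a - 1) * g x" for x
    using c by (cases "x \<ge> 0")
      (simp_all add: f_def g_def powr_mult exp_minus field_simps indicator_def zero_le_mult_iff)
  have gm: "g \<in> borel_measurable borel" unfolding g_def by measurable
  have gnn: "0 \<le> g x" for x by (simp add: g_def indicator_def)
  have "(\<integral>\<^sup>+x. ennreal (f (c * x)) \<partial>lborel) = ennreal (c powr (a - 1)) * (\<integral>\<^sup>+x. ennreal (g x) \<partial>lborel)"
    unfolding fg using gnn
    by (subst nn_integral_cmult[symmetric]) (use gm in \<open>auto simp: ennreal_mult\<close>)
  with G1 have G2: "ennreal (Gamma a) = ennreal (c * c powr (a - 1)) * (\<integral>\<^sup>+x. ennreal (g x) \<partial>lborel)"
    using c by (simp add: ennreal_mult mult.assoc)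
  define E where "E = ennreal (c * c powr (a - 1))"
  have E: "E \<noteq> 0" "E \<noteq> top" using c by (auto simp: E_def)
  have "(\<integral>\<^sup>+x. ennreal (g x) \<partial>lborel) = ennreal (Gamma a) / E"
    using G2 mult_divide_eq_ennreal[OF E] by (simp add: E_def mult.commute)
  also have "\<dots> = ennreal (Gamma a * c powr (- a))"
    using c a Gamma_real_pos[OF a]
    by (simp add: E_def divide_ennreal powr_minus powr_add[symmetric] field_simps powr_diff)
  finally have "(g has_integral (Gamma a * c powr (- a))) UNIV"
    using gm gnn Gamma_real_pos[OF a] c by (intro nn_integral_has_integral) auto
  then have "((\<lambda>x. if x \<in> {0..} then x powr (a - 1) * exp (- (c * x)) else 0)
      has_integral (Gamma a * c powr (- a))) UNIV"
    by (rule has_integral_cong[THEN iffD1, rotated]) (simp add: g_def indicator_def)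
  then show ?thesis
    by (simp only: has_integral_restrict_UNIV)
qed

lemma exp_sum_moment:
  assumes "0 \<le> \<gamma>" "\<gamma> < 2"
  shows "((\<lambda>s. s powr (1 - \<gamma>) * exp_sum p m s) has_integral
           Gamma (2 - \<gamma>) * (\<Sum>i\<le>m. p i / (real i + 1)\<^sup>2 * (real i + 1) powr \<gamma>)) {0..}"
proof -
  have "((\<lambda>s. \<Sum>i\<le>m. p i * (s powr (1 - \<gamma>) * exp (- ((real i + 1) * s)))) has_integral
           (\<Sum>i\<le>m. p i * (Gamma (2 - \<gamma>) * (real i + 1) powr (\<gamma> - 2)))) {0..}"
  proof (intro has_integral_sum finite_atMost has_integral_mult_right)
    fix i
    show "((\<lambda>s. s powr (1 - \<gamma>) * exp (- ((real i + 1) * s))) has_integral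
            (Gamma (2 - \<gamma>) * (real i + 1) powr (\<gamma> - 2))) {0..}"
      using has_integral_powr_exp_scaled[of "2 - \<gamma>" "real i + 1"] assms by simp
  qed
  moreover have "(real i + 1) powr (\<gamma> - 2) = (real i + 1) powr \<gamma> / (real i + 1)\<^sup>2" for i
    by (simp add: powr_diff powr_realpow)
  ultimately show ?thesis
    unfolding exp_sum_def by (simp add: sum_distrib_left mult_ac)
qed

section \<open>Kernel sums squeezing the indicator of \<open>[1, \<infinity>)\<close>\<close>

text \<open>
  Substituting \<open>y = exp (- s)\<close> turns \<open>exp_sum p m s\<close> into \<open>y\<close> times a polynomial in \<open>y\<close>,
  so Stone-Weierstrass on \<open>[0, 1]\<close> applies to \<open>u (- ln y) / y\<close>; the cut-off at \<open>b\<close> makes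
  this function continuous at \<open>y = 0\<close>.
\<close>

lemma exp_sum_approx:
  fixes u :: "real \<Rightarrow> real"
  assumes cont: "continuous_on UNIV u" and vanish: "\<And>s. b \<le> s \<Longrightarrow> u s = 0"
    and "0 \<le> b" and "0 < \<eta>"
  obtains p m where "\<And>s. 0 \<le> s \<Longrightarrow> \<bar>exp_sum p m s - u s\<bar> \<le> \<eta> * exp (- s)"
proof -
  define c where "c = exp (- b)"
  have c: "0 < c" by (simp add: c_def)
  define f where "f y = u (- ln (max y c)) / max y c" for y
  have "continuous_on {0..1} f"
    unfolding f_def by (intro continuous_intros continuous_on_compose2[OF cont]) (use c in auto)
  from Stone_Weierstrass_real_polynomial_function[OF _ this \<open>0 < \<eta>\<close>]
  obtain g where g: "real_polynomial_function g" "\<And>y. y \<in> {0..1} \<Longrightarrow> \<bar>f y - g y\<bar> < \<eta>"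
    by auto
  from real_polynomial_function_imp_sum[OF g(1)]
  obtain a n where g_eq: "g = (\<lambda>x. \<Sum>i\<le>n. a i * x ^ i)" by auto
  show ?thesis
  proof (rule that[of a n])
    fix s :: real assume s: "0 \<le> s"
    define y where "y = exp (- s)"
    have y: "y \<in> {0..1}" using s by (auto simp: y_def)
    have fy: "y * f y = u s"
    proof (cases "s \<le> b")
      case True
      then have "max y c = y" by (simp add: y_def c_def)
      then show ?thesis by (simp add: f_def y_def)
    next
      case False
      then have "max y c = c" by (simp add: y_def c_def)
      then show ?thesis using vanish[of s] vanish[of b] False by (simp add: f_def c_def)
    qed
    have "exp_sum a n s = y * g y"
      unfolding g_eq y_def exp_sum_def sum_distrib_left
      by (intro sum.cong) (simp_all add: algebra_simps flip: exp_of_nat_mult exp_add)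
    then have "exp_sum a n s - u s = y * (g y - f y)"
      using fy by (simp add: algebra_simps)
    then have "\<bar>exp_sum a n s - u s\<bar> = y * \<bar>f y - g y\<bar>"
      using y by (simp add: abs_mult abs_minus_commute)
    also have "\<dots> \<le> y * \<eta>"
      using g(2)[OF y] y by (intro mult_left_mono) auto
    finally show "\<bar>exp_sum a n s - u s\<bar> \<le> \<eta> * exp (- s)"
      by (simp add: y_def mult.commute)
  qed
qed

lemma exp_sum_approx_from_above:
  fixes u :: "real \<Rightarrow> real"
  assumes "continuous_on UNIV u" "\<And>s. b \<le> s \<Longrightarrow> u s = 0" "0 \<le> b" "0 < \<eta>"
  obtains p m where "\<And>s. 0 \<le> s \<Longrightarrow> u s \<le> exp_sum p m s \<and> exp_sum p m s \<le> u s + \<eta> * exp (- s)"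
proof -
  obtain p m where p: "\<And>s. 0 \<le> s \<Longrightarrow> \<bar>exp_sum p m s - u s\<bar> \<le> \<eta> / 2 * exp (- s)"
    using exp_sum_approx[OF assms(1-3), of "\<eta> / 2"] \<open>0 < \<eta>\<close> by auto
  define p' where "p' i = p i + (if i = 0 then \<eta> / 2 else 0)" for i
  have "exp_sum p' m s = exp_sum p m s + (\<Sum>i\<le>m. if i = 0 then \<eta> / 2 * exp (- ((real i + 1) * s)) else 0)"
    for s
  proof -
    have "p' i * exp (- ((real i + 1) * s))
        = p i * exp (- ((real i + 1) * s)) + (if i = 0 then \<eta> / 2 * exp (- ((real i + 1) * s)) else 0)" for i
      by (simp add: p'_def distrib_right)
    then show ?thesis unfolding exp_sum_def by (simp only: sum.distrib)
  qed
  then have exp_sum_p': "exp_sum p' m s = exp_sum p m s + \<eta> / 2 * exp (- s)" for s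
    by (simp add: sum.delta)
  show ?thesis
  proof (rule that)
    fix s :: real assume "0 \<le> s"
    with p[of s] show "u s \<le> exp_sum p' m s \<and> exp_sum p' m s \<le> u s + \<eta> * exp (- s)"
      unfolding exp_sum_p' abs_le_iff by linarith
  qed
qed

definition trapezoid :: "real \<Rightarrow> real \<Rightarrow> real \<Rightarrow> real \<Rightarrow> real" where
  "trapezoid a b \<theta> s = max 0 (min 1 (min ((s - a) / \<theta> + 1) ((b - s) / \<theta> + 1)))"

lemma continuous_on_trapezoid: "0 < \<theta> \<Longrightarrow> continuous_on UNIV (trapezoid a b \<theta>)"
  unfolding trapezoid_def by (intro continuous_intros) auto

lemma trapezoid_nonneg: "0 \<le> trapezoid a b \<theta> s"
  and trapezoid_le_1: "trapezoid a b \<theta> s \<le> 1"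
  by (auto simp: trapezoid_def)

lemma trapezoid_eq_1: "0 < \<theta> \<Longrightarrow> a \<le> s \<Longrightarrow> s \<le> b \<Longrightarrow> trapezoid a b \<theta> s = 1"
  by (auto simp: trapezoid_def field_simps)

lemma trapezoid_eq_0: "0 < \<theta> \<Longrightarrow> s \<le> a - \<theta> \<or> b + \<theta> \<le> s \<Longrightarrow> trapezoid a b \<theta> s = 0"
proof -
  assume "0 < \<theta>" "s \<le> a - \<theta> \<or> b + \<theta> \<le> s"
  then have "(s - a) / \<theta> + 1 \<le> 0 \<or> (b - s) / \<theta> + 1 \<le> 0"
    by (auto simp: field_simps)
  then show ?thesis by (auto simp: trapezoid_def)
qed

lemma powr_le_max_endpoints:
  fixes a b s e :: real
  assumes "0 < a" "a \<le> s" "s \<le> b"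
  shows "s powr e \<le> max (a powr e) (b powr e)"
  using assms powr_mono2[of e s b] powr_mono2'[of e a s] by (cases "0 \<le> e") auto

lemma min_endpoints_le_powr:
  fixes a b s e :: real
  assumes "0 < a" "a \<le> s" "s \<le> b"
  shows "min (a powr e) (b powr e) \<le> s powr e"
  using assms powr_mono2[of e a s] powr_mono2'[of e s b] by (cases "0 \<le> e") auto

lemma has_integral_const_interval: "a \<le> b \<Longrightarrow> ((\<lambda>x. c) has_integral (b - a) * c) {a..b}"
  for a b c :: real
  using has_integral_const_real[of c a b] by simp

lemma exp_sum_moment_le:
  assumes \<gamma>: "0 \<le> \<gamma>" "\<gamma> < 2" and ab: "0 < a" "a \<le> b"
    and upper: "\<And>s. 0 \<le> s \<Longrightarrow> exp_sum p m s \<le> u s + \<eta> * exp (- s)"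
    and u_le_1: "\<And>s. u s \<le> 1" and u_outside: "\<And>s. s \<notin> {a..b} \<Longrightarrow> u s = 0"
  shows "Gamma (2 - \<gamma>) * (\<Sum>i\<le>m. p i / (real i + 1)\<^sup>2 * (real i + 1) powr \<gamma>)
           \<le> (b - a) * max (a powr (1 - \<gamma>)) (b powr (1 - \<gamma>)) + \<eta> * Gamma (2 - \<gamma>)"
proof (rule has_integral_le[OF exp_sum_moment[OF \<gamma>] has_integral_add])
  define Q where "Q = max (a powr (1 - \<gamma>)) (b powr (1 - \<gamma>))"
  show "((\<lambda>s. if s \<in> {a..b} then Q else 0) has_integral (b - a) * Q) {0..}"
    using ab by (subst has_integral_restrict) (auto intro: has_integral_const_interval)
  show "((\<lambda>s. \<eta> * (s powr (1 - \<gamma>) * exp (- s))) has_integral \<eta> * Gamma (2 - \<gamma>)) {0..}"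
    using has_integral_powr_exp_scaled[of "2 - \<gamma>" 1] \<gamma> by (intro has_integral_mult_right) simp
  fix s :: real assume "s \<in> {0..}"
  then have "s powr (1 - \<gamma>) * exp_sum p m s \<le> s powr (1 - \<gamma>) * (u s + \<eta> * exp (- s))"
    using upper by (intro mult_left_mono) auto
  moreover have "s powr (1 - \<gamma>) * u s \<le> (if s \<in> {a..b} then Q else 0)"
    using powr_le_max_endpoints[of a s b "1 - \<gamma>"] ab u_le_1[of s] u_outside[of s]
    by (auto simp: Q_def intro: order_trans[OF mult_left_le])
  ultimately show "s powr (1 - \<gamma>) * exp_sum p m s
      \<le> (if s \<in> {a..b} then Q else 0) + \<eta> * (s powr (1 - \<gamma>) * exp (- s))"
    by (simp add: algebra_simps)
qed

lemma exp_sum_moment_ge: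
  assumes \<gamma>: "0 \<le> \<gamma>" "\<gamma> < 2" and ab: "0 < a" "a \<le> b"
    and lower: "\<And>s. 0 \<le> s \<Longrightarrow> u s - \<eta> * exp (- s) \<le> exp_sum p m s"
    and u_nonneg: "\<And>s. 0 \<le> u s" and u_inside: "\<And>s. s \<in> {a..b} \<Longrightarrow> u s = 1"
  shows "(b - a) * min (a powr (1 - \<gamma>)) (b powr (1 - \<gamma>)) - \<eta> * Gamma (2 - \<gamma>)
           \<le> Gamma (2 - \<gamma>) * (\<Sum>i\<le>m. p i / (real i + 1)\<^sup>2 * (real i + 1) powr \<gamma>)"
proof (rule has_integral_le[OF has_integral_diff exp_sum_moment[OF \<gamma>]])
  define Q where "Q = min (a powr (1 - \<gamma>)) (b powr (1 - \<gamma>))"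
  show "((\<lambda>s. if s \<in> {a..b} then Q else 0) has_integral (b - a) * Q) {0..}"
    using ab by (subst has_integral_restrict) (auto intro: has_integral_const_interval)
  show "((\<lambda>s. \<eta> * (s powr (1 - \<gamma>) * exp (- s))) has_integral \<eta> * Gamma (2 - \<gamma>)) {0..}"
    using has_integral_powr_exp_scaled[of "2 - \<gamma>" 1] \<gamma> by (intro has_integral_mult_right) simp
  fix s :: real assume "s \<in> {0..}"
  then have "s powr (1 - \<gamma>) * (u s - \<eta> * exp (- s)) \<le> s powr (1 - \<gamma>) * exp_sum p m s"
    using lower by (intro mult_left_mono) auto
  moreover have "(if s \<in> {a..b} then Q else 0) \<le> s powr (1 - \<gamma>) * u s"
    using min_endpoints_le_powr[of a s b "1 - \<gamma>"] ab u_nonneg[of s] u_inside[of s]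
    by (auto simp: Q_def)
  ultimately show "(if s \<in> {a..b} then Q else 0) - \<eta> * (s powr (1 - \<gamma>) * exp (- s))
      \<le> s powr (1 - \<gamma>) * exp_sum p m s"
    by (simp add: algebra_simps)
qed

lemma obtain_small_at_right_0:
  fixes b :: real
  assumes "\<forall>\<^sub>F \<delta> in at_right 0. P \<delta>" "0 < b"
  obtains \<delta> where "0 < \<delta>" "\<delta> \<le> b" "P \<delta>"
proof -
  have "\<forall>\<^sub>F \<delta> in at_right 0. 0 < \<delta> \<and> \<delta> \<le> b"
    using assms(2) by (auto simp: eventually_at_right_field intro!: exI[of _ b])
  with assms(1) have "\<forall>\<^sub>F \<delta> in at_right 0. (0 < \<delta> \<and> \<delta> \<le> b) \<and> P \<delta>"
    by (rule eventually_conj[rotated])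
  then show ?thesis
    using eventually_happens'[OF trivial_limit_at_right_real] that by blast
qed

lemma kernel_sum_ge_step:
  assumes nonneg: "\<And>s. 0 \<le> s \<Longrightarrow> 0 \<le> exp_sum p m s"
    and ge_1: "\<And>s. s \<in> {a..1} \<Longrightarrow> 1 \<le> exp_sum p m s"
    and a: "0 \<le> a" "a \<le> 1" and x: "0 \<le> x"
  shows "(1 - a) * a * indicator {1..} x \<le> kernel_sum (\<lambda>i. p i / (real i + 1)\<^sup>2) m x"
proof -
  define K where "K = kernel_sum (\<lambda>i. p i / (real i + 1)\<^sup>2) m"
  have mono: "K y \<le> K z" if "0 \<le> y" "y \<le> z" for y z
  proof -
    have "0 \<le> K z - K y"
    proof (rule has_integral_nonneg[OF kernel_sum_has_integral[OF that(2), of p m], folded K_def])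
      fix s assume "s \<in> {y..z}"
      then show "0 \<le> s * exp_sum p m s"
        using that nonneg[of s] by auto
    qed
    then show ?thesis by simp
  qed
  have "(1 - a) * a \<le> K 1 - K a"
  proof (rule has_integral_le[OF has_integral_const_interval[OF a(2)]
        kernel_sum_has_integral[OF a(2), of p m], folded K_def])
    fix s assume s: "s \<in> {a..1}"
    then show "a \<le> s * exp_sum p m s"
      using a ge_1[OF s] mult_mono[of a s 1 "exp_sum p m s"] by auto
  qed
  then show ?thesis
    using mono[of 0 x] mono[of 0 a] mono[of a 1] mono[of 1 x] x a
    by (cases "1 \<le> x") (simp_all add: K_def)
qed

lemma kernel_sum_le_step:
  assumes outside: "\<And>s. 0 \<le> s \<Longrightarrow> s \<le> 1 \<or> b \<le> s \<Longrightarrow> exp_sum p m s \<le> 0"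
    and le_1: "\<And>s. 0 \<le> s \<Longrightarrow> exp_sum p m s \<le> 1"
    and b: "1 \<le> b" and x: "0 \<le> x"
  shows "kernel_sum (\<lambda>i. p i / (real i + 1)\<^sup>2) m x \<le> (b - 1) * b * indicator {1..} x"
proof -
  define K where "K = kernel_sum (\<lambda>i. p i / (real i + 1)\<^sup>2) m"
  have antimono: "K z \<le> K y" if "0 \<le> y" "y \<le> z" "\<And>s. s \<in> {y..z} \<Longrightarrow> s \<le> 1 \<or> b \<le> s" for y z
  proof -
    have "K z - K y \<le> 0"
    proof (rule has_integral_le[OF kernel_sum_has_integral[OF that(2), of p m, folded K_def] has_integral_0])
      fix s assume "s \<in> {y..z}"
      then show "s * exp_sum p m s \<le> 0"
        using that outside[of s] by (auto intro: mult_nonneg_nonpos)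
    qed
    then show ?thesis by simp
  qed
  have mid: "K y - K 1 \<le> (y - 1) * b" if "1 \<le> y" "y \<le> b" for y
  proof (rule has_integral_le[OF kernel_sum_has_integral[OF that(1), of p m, folded K_def]
        has_integral_const_interval[OF that(1)]])
    fix s assume s: "s \<in> {1..y}"
    then have "s * exp_sum p m s \<le> s"
      using le_1[of s] by (intro mult_left_le) auto
    then show "s * exp_sum p m s \<le> b" using s that unfolding atLeastAtMost_iff by linarith
  qed
  have below_1: "K y \<le> 0" if "0 \<le> y" "y \<le> 1" for y
    using antimono[of 0 y] that by (simp add: K_def)
  consider "x < 1" | "1 \<le> x" "x \<le> b" | "b < x" by linarith
  then show ?thesis
  proof cases
    case 1
    then show ?thesis using below_1[of x] x by (simp add: K_def)
  next
    case 2
    have "K x \<le> K 1 + (x - 1) * b"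
      using mid[OF 2] by simp
    also have "\<dots> \<le> 0 + (b - 1) * b"
      using below_1[of 1] 2 b by (intro add_mono mult_right_mono) auto
    finally show ?thesis
      using 2 by (simp add: K_def)
  next
    case 3
    then show ?thesis using antimono[of b x] mid[of b] below_1[of 1] b by (simp add: K_def)
  qed
qed

lemma kernel_sum_majorant:
  assumes \<gamma>: "0 \<le> \<gamma>" "\<gamma> < 2" and \<epsilon>: "0 < \<epsilon>"
  obtains q m where "\<And>x. 0 \<le> x \<Longrightarrow> indicator {1..} x \<le> kernel_sum q m x"
    and "(\<Sum>i\<le>m. q i * (real i + 1) powr \<gamma>) \<le> 1 / Gamma (2 - \<gamma>) + \<epsilon>"
proof -
  define G where "G = Gamma (2 - \<gamma>)"
  have G: "0 < G" using \<gamma> by (simp add: G_def Gamma_real_pos)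
  define R where "R \<delta> = max ((1 - \<delta> - \<delta>\<^sup>2) powr (1 - \<gamma>)) ((1 + \<delta>\<^sup>2) powr (1 - \<gamma>)) * (1 + 2 * \<delta>) / (1 - \<delta>)"
    for \<delta> :: real
  have "(R \<longlongrightarrow> R 0) (at_right 0)"
    unfolding R_def by (intro tendsto_intros) auto
  moreover have "R 0 < 1 + \<epsilon> * G / 2"
    using G \<epsilon> by (simp add: R_def)
  ultimately have "\<forall>\<^sub>F \<delta> in at_right 0. R \<delta> < 1 + \<epsilon> * G / 2"
    by (rule order_tendstoD(2))
  then obtain \<delta> where \<delta>: "0 < \<delta>" "\<delta> \<le> 1 / 8" "R \<delta> < 1 + \<epsilon> * G / 2"
    by (rule obtain_small_at_right_0[where b = "1 / 8"]) auto
  have \<delta>2: "0 \<le> \<delta>\<^sup>2" "\<delta>\<^sup>2 \<le> \<delta>" using \<delta> by (auto simp: power2_eq_square mult_left_le)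
  define A where "A = \<delta> * (1 - \<delta>)"
  have A: "0 < A" using \<delta> by (simp add: A_def)
  txt \<open>Ramps of width \<open>\<delta>\<^sup>2\<close> keep the support length \<open>\<delta> + 2\<delta>\<^sup>2\<close> of \<open>u\<close> comparable to \<open>A\<close>.\<close>
  define u where "u = trapezoid (1 - \<delta>) 1 (\<delta>\<^sup>2)"
  have u: "0 \<le> u s" "u s \<le> 1" for s
    unfolding u_def by (rule trapezoid_nonneg trapezoid_le_1)+
  have u_vanish: "u s = 0" if "3 \<le> s" for s
    unfolding u_def using that \<delta> \<delta>2 by (intro trapezoid_eq_0) auto
  obtain p m where W: "\<And>s. 0 \<le> s \<Longrightarrow> u s \<le> exp_sum p m s \<and> exp_sum p m s \<le> u s + A * \<epsilon> / 2 * exp (- s)"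
    using exp_sum_approx_from_above[of u 3 "A * \<epsilon> / 2"] u_vanish A \<epsilon> \<delta>
    by (auto simp: u_def continuous_on_trapezoid)
  have step: "A * indicator {1..} x \<le> kernel_sum (\<lambda>i. p i / (real i + 1)\<^sup>2) m x" if "0 \<le> x" for x
  proof -
    have "1 \<le> exp_sum p m s" if "s \<in> {1 - \<delta>..1}" for s
    proof -
      have "u s = 1"
        unfolding u_def using that \<delta> by (intro trapezoid_eq_1) auto
      then show ?thesis using W[of s] that \<delta> by auto
    qed
    moreover have "0 \<le> exp_sum p m s" if "0 \<le> s" for s
      using W[OF that] u(1)[of s] by linarith
    moreover have "A = (1 - (1 - \<delta>)) * (1 - \<delta>)"
      by (simp add: A_def)
    ultimately show ?thesis
      using kernel_sum_ge_step[where p = p and m = m and a = "1 - \<delta>" and x = x] \<delta> that by simp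
  qed
  have interval: "0 < 1 - \<delta> - \<delta>\<^sup>2" "1 - \<delta> - \<delta>\<^sup>2 \<le> 1 + \<delta>\<^sup>2"
    using \<delta> \<delta>2 by linarith+
  have "G * (\<Sum>i\<le>m. p i / (real i + 1)\<^sup>2 * (real i + 1) powr \<gamma>)
      \<le> (1 + \<delta>\<^sup>2 - (1 - \<delta> - \<delta>\<^sup>2)) * max ((1 - \<delta> - \<delta>\<^sup>2) powr (1 - \<gamma>)) ((1 + \<delta>\<^sup>2) powr (1 - \<gamma>))
        + A * \<epsilon> / 2 * G"
    unfolding G_def
  proof (rule exp_sum_moment_le[OF \<gamma> interval])
    show "u s = 0" if "s \<notin> {1 - \<delta> - \<delta>\<^sup>2..1 + \<delta>\<^sup>2}" for s
      unfolding u_def using that \<delta> by (intro trapezoid_eq_0) auto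
  qed (use W u in auto)
  also have "\<dots> = A * R \<delta> + A * \<epsilon> / 2 * G"
    using \<delta> by (simp add: A_def R_def power2_eq_square field_simps)
  also have "\<dots> \<le> A * (1 + \<epsilon> * G / 2) + A * \<epsilon> / 2 * G"
    using \<delta>(3) A by (intro add_right_mono mult_left_mono) auto
  also have "\<dots> = A * (1 / G + \<epsilon>) * G"
    using G by (simp add: field_simps)
  finally have moment: "(\<Sum>i\<le>m. p i / (real i + 1)\<^sup>2 * (real i + 1) powr \<gamma>) \<le> A * (1 / G + \<epsilon>)"
    using G by (simp add: mult.commute)
  show ?thesis
  proof (rule that[of "\<lambda>i. 1 / A * (p i / (real i + 1)\<^sup>2)" m])
    show "indicator {1..} x \<le> kernel_sum (\<lambda>i. 1 / A * (p i / (real i + 1)\<^sup>2)) m x" if "0 \<le> x" for x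
      using step[OF that] A unfolding kernel_sum_cmult by (simp add: field_simps)
    have "(\<Sum>i\<le>m. 1 / A * (p i / (real i + 1)\<^sup>2) * (real i + 1) powr \<gamma>)
        = 1 / A * (\<Sum>i\<le>m. p i / (real i + 1)\<^sup>2 * (real i + 1) powr \<gamma>)"
      by (simp add: sum_distrib_left mult.assoc)
    also have "\<dots> \<le> 1 / A * (A * (1 / G + \<epsilon>))"
      using moment A by (intro mult_left_mono) auto
    finally show "(\<Sum>i\<le>m. 1 / A * (p i / (real i + 1)\<^sup>2) * (real i + 1) powr \<gamma>) \<le> 1 / Gamma (2 - \<gamma>) + \<epsilon>"
      using A by (simp add: G_def)
  qed
qed

lemma kernel_sum_minorant:
  assumes \<gamma>: "0 \<le> \<gamma>" "\<gamma> < 2" and \<epsilon>: "0 < \<epsilon>"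
  obtains q m where "\<And>x. 0 \<le> x \<Longrightarrow> kernel_sum q m x \<le> indicator {1..} x"
    and "1 / Gamma (2 - \<gamma>) - \<epsilon> \<le> (\<Sum>i\<le>m. q i * (real i + 1) powr \<gamma>)"
proof -
  define G where "G = Gamma (2 - \<gamma>)"
  have G: "0 < G" using \<gamma> by (simp add: G_def Gamma_real_pos)
  define R where "R \<delta> = min ((1 + \<delta>\<^sup>2) powr (1 - \<gamma>)) ((1 + \<delta> - \<delta>\<^sup>2) powr (1 - \<gamma>)) * (1 - 2 * \<delta>) / (1 + \<delta>)"
    for \<delta> :: real
  have "(R \<longlongrightarrow> R 0) (at_right 0)"
    unfolding R_def by (intro tendsto_intros) auto
  moreover have "1 - \<epsilon> * G / 2 < R 0"
    using G \<epsilon> by (simp add: R_def)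
  ultimately have "\<forall>\<^sub>F \<delta> in at_right 0. 1 - \<epsilon> * G / 2 < R \<delta>"
    by (rule order_tendstoD(1))
  then obtain \<delta> where \<delta>: "0 < \<delta>" "\<delta> \<le> 1 / 8" "1 - \<epsilon> * G / 2 < R \<delta>"
    by (rule obtain_small_at_right_0[where b = "1 / 8"]) auto
  have \<delta>2: "0 \<le> \<delta>\<^sup>2" "\<delta>\<^sup>2 \<le> \<delta> / 8" using \<delta> by (auto simp: power2_eq_square)
  define B where "B = \<delta> * (1 + \<delta>)"
  have B: "0 < B" using \<delta> by (simp add: B_def)
  define u where "u = trapezoid (1 + \<delta>\<^sup>2) (1 + \<delta> - \<delta>\<^sup>2) (\<delta>\<^sup>2)"
  have u: "0 \<le> u s" "u s \<le> 1" for s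
    unfolding u_def by (rule trapezoid_nonneg trapezoid_le_1)+
  have u_outside: "u s = 0" if "s \<le> 1 \<or> 1 + \<delta> \<le> s" for s
    unfolding u_def using that \<delta> by (intro trapezoid_eq_0) auto
  obtain p m where W: "\<And>s. 0 \<le> s \<Longrightarrow> - u s \<le> exp_sum p m s \<and> exp_sum p m s \<le> - u s + B * \<epsilon> / 2 * exp (- s)"
    using exp_sum_approx_from_above[of "\<lambda>s. - u s" 3 "B * \<epsilon> / 2"] u_outside B \<epsilon> \<delta> \<delta>2
    by (auto simp: u_def continuous_on_trapezoid continuous_on_minus)
  define p' where "p' i = - p i" for i
  have W': "u s - B * \<epsilon> / 2 * exp (- s) \<le> exp_sum p' m s \<and> exp_sum p' m s \<le> u s" if "0 \<le> s" for s
    using W[OF that] exp_sum_uminus[of p m s] by (auto simp: p'_def[abs_def])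
  have step: "kernel_sum (\<lambda>i. p' i / (real i + 1)\<^sup>2) m x \<le> B * indicator {1..} x" if "0 \<le> x" for x
  proof -
    have "exp_sum p' m s \<le> 0" if "0 \<le> s" "s \<le> 1 \<or> 1 + \<delta> \<le> s" for s
      using W'[OF that(1)] u_outside[OF that(2)] by linarith
    moreover have "exp_sum p' m s \<le> 1" if "0 \<le> s" for s
      using W'[OF that] u(2)[of s] by linarith
    moreover have "B = (1 + \<delta> - 1) * (1 + \<delta>)"
      by (simp add: B_def)
    ultimately show ?thesis
      using kernel_sum_le_step[where p = p' and m = m and b = "1 + \<delta>" and x = x] \<delta> that by simp
  qed
  have interval: "0 < 1 + \<delta>\<^sup>2" "1 + \<delta>\<^sup>2 \<le> 1 + \<delta> - \<delta>\<^sup>2"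
    using \<delta> \<delta>2 by linarith+
  have "B * (1 / G - \<epsilon>) * G = B * (1 - \<epsilon> * G / 2) - B * \<epsilon> / 2 * G"
    using G by (simp add: field_simps)
  also have "\<dots> \<le> B * R \<delta> - B * \<epsilon> / 2 * G"
    using \<delta>(3) B by (intro diff_right_mono mult_left_mono) auto
  also have "B * R \<delta> = (1 + \<delta> - \<delta>\<^sup>2 - (1 + \<delta>\<^sup>2))
      * min ((1 + \<delta>\<^sup>2) powr (1 - \<gamma>)) ((1 + \<delta> - \<delta>\<^sup>2) powr (1 - \<gamma>))"
    using \<delta> by (simp add: B_def R_def power2_eq_square field_simps)
  also have "\<dots> - B * \<epsilon> / 2 * G \<le> G * (\<Sum>i\<le>m. p' i / (real i + 1)\<^sup>2 * (real i + 1) powr \<gamma>)"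
    unfolding G_def
  proof (rule exp_sum_moment_ge[OF \<gamma> interval])
    show "u s = 1" if "s \<in> {1 + \<delta>\<^sup>2..1 + \<delta> - \<delta>\<^sup>2}" for s
      unfolding u_def using that \<delta> by (intro trapezoid_eq_1) auto
  qed (use W' u in auto)
  finally have moment: "B * (1 / G - \<epsilon>) \<le> (\<Sum>i\<le>m. p' i / (real i + 1)\<^sup>2 * (real i + 1) powr \<gamma>)"
    using G by (simp add: mult.commute)
  show ?thesis
  proof (rule that[of "\<lambda>i. 1 / B * (p' i / (real i + 1)\<^sup>2)" m])
    show "kernel_sum (\<lambda>i. 1 / B * (p' i / (real i + 1)\<^sup>2)) m x \<le> indicator {1..} x" if "0 \<le> x" for x
      using step[OF that] B unfolding kernel_sum_cmult by (simp add: field_simps)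
    have "1 / Gamma (2 - \<gamma>) - \<epsilon> = 1 / B * (B * (1 / G - \<epsilon>))"
      using B by (simp add: G_def)
    also have "\<dots> \<le> 1 / B * (\<Sum>i\<le>m. p' i / (real i + 1)\<^sup>2 * (real i + 1) powr \<gamma>)"
      using moment B by (intro mult_left_mono) auto
    also have "\<dots> = (\<Sum>i\<le>m. 1 / B * (p' i / (real i + 1)\<^sup>2) * (real i + 1) powr \<gamma>)"
      by (simp add: sum_distrib_left mult.assoc)
    finally show "1 / Gamma (2 - \<gamma>) - \<epsilon> \<le> (\<Sum>i\<le>m. 1 / B * (p' i / (real i + 1)\<^sup>2) * (real i + 1) powr \<gamma>)" .
  qed
qed

section \<open>Random variables with a Laplace exponent\<close>

lemma (in prob_space) integrable_bounded:
  fixes f :: "'a \<Rightarrow> real"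
  assumes "f \<in> borel_measurable M" "\<And>x. x \<in> space M \<Longrightarrow> \<bar>f x\<bar> \<le> B"
  shows "integrable M f"
  using assms by (intro integrable_const_bound[of f B]) auto

lemma (in prob_space) abs_integral_le_bound:
  fixes f :: "'a \<Rightarrow> real"
  assumes "f \<in> borel_measurable M" "\<And>x. x \<in> space M \<Longrightarrow> \<bar>f x\<bar> \<le> B"
  shows "\<bar>integral\<^sup>L M f\<bar> \<le> B"
proof -
  have "\<bar>integral\<^sup>L M f\<bar> \<le> (\<integral>x. \<bar>f x\<bar> \<partial>M)"
    by (rule integral_abs_bound)
  also have "\<dots> \<le> B"
    using assms integrable_bounded[OF assms] by (intro integral_le_const) auto
  finally show ?thesis .
qed

lemma (in prob_space) has_real_derivative_laplace_transform:
  fixes X :: "'a \<Rightarrow> real"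
  assumes X: "X \<in> borel_measurable M" "\<And>\<omega>. \<omega> \<in> space M \<Longrightarrow> 0 \<le> X \<omega>" and l: "0 < l"
  shows "((\<lambda>l. \<integral>\<omega>. exp (- l * X \<omega>) \<partial>M) has_real_derivative - (\<integral>\<omega>. X \<omega> * exp (- l * X \<omega>) \<partial>M)) (at l)"
proof -
  define L where "L l = (\<integral>\<omega>. exp (- l * X \<omega>) \<partial>M)" for l
  define D where "D = (\<integral>\<omega>. X \<omega> * exp (- l * X \<omega>) \<partial>M)"
  have integrable_exp: "integrable M (\<lambda>\<omega>. exp (- c * X \<omega>))" if "0 \<le> c" for c
    using X that by (intro integrable_bounded[of _ 1]) auto
  have integrable_D: "integrable M (\<lambda>\<omega>. X \<omega> * exp (- l * X \<omega>))"
    using X l mult_exp_minus_le by (intro integrable_bounded[of _ "1 / l"]) auto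
  have quotient: "\<bar>(L (l + h) - L l) / h - (- D)\<bar> \<le> 4 / l\<^sup>2 * \<bar>h\<bar>" if h: "h \<noteq> 0" "\<bar>h\<bar> < l / 2" for h
  proof -
    have "L (l + h) - L l + h * D
        = (\<integral>\<omega>. exp (- (l + h) * X \<omega>) - exp (- l * X \<omega>) + h * (X \<omega> * exp (- l * X \<omega>)) \<partial>M)"
      unfolding L_def D_def using h l integrable_exp[of "l + h"] integrable_exp[of l] integrable_D
      by simp
    also have "\<bar>\<dots>\<bar> \<le> 4 * h\<^sup>2 / l\<^sup>2"
      using X l h abs_exp_second_difference_le by (intro abs_integral_le_bound) auto
    finally have bound: "\<bar>L (l + h) - L l + h * D\<bar> \<le> 4 * h\<^sup>2 / l\<^sup>2" .
    have "(L (l + h) - L l) / h - (- D) = (L (l + h) - L l + h * D) / h"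
      using h by (simp add: field_simps)
    then have "\<bar>(L (l + h) - L l) / h - (- D)\<bar> = \<bar>L (l + h) - L l + h * D\<bar> / \<bar>h\<bar>"
      by (simp add: abs_divide)
    also have "\<dots> \<le> 4 * h\<^sup>2 / l\<^sup>2 / \<bar>h\<bar>"
      using bound by (intro divide_right_mono) auto
    also have "\<dots> = 4 / l\<^sup>2 * \<bar>h\<bar>"
      using h by (simp add: power2_eq_square field_simps)
    finally show ?thesis .
  qed
  have "((\<lambda>h. (L (l + h) - L l) / h - (- D)) \<longlongrightarrow> 0) (at 0)"
  proof (rule Lim_null_comparison)
    show "\<forall>\<^sub>F h in at 0. norm ((L (l + h) - L l) / h - (- D)) \<le> 4 / l\<^sup>2 * \<bar>h\<bar>"
      unfolding eventually_at using l quotient by (intro exI[of _ "l / 2"]) auto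
    show "((\<lambda>h. 4 / l\<^sup>2 * \<bar>h\<bar>) \<longlongrightarrow> 0) (at 0)"
      by (intro tendsto_mult_right_zero tendsto_rabs_zero tendsto_ident_at)
  qed
  then show ?thesis
    unfolding DERIV_def L_def D_def by (rule LIM_zero_cancel)
qed

locale laplace_family = prob_space M
  for M :: "'a measure" and X :: "real \<Rightarrow> 'a \<Rightarrow> real" and \<phi> :: "real \<Rightarrow> real" +
  assumes measurable_X: "0 \<le> t \<Longrightarrow> X t \<in> borel_measurable M"
    and X_nonneg: "0 \<le> t \<Longrightarrow> \<omega> \<in> space M \<Longrightarrow> 0 \<le> X t \<omega>"
    and laplace_transform: "0 \<le> t \<Longrightarrow> 0 < l \<Longrightarrow> (\<integral>\<omega>. exp (- l * X t \<omega>) \<partial>M) = exp (- t * \<phi> l)"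
begin

definition H :: "real \<Rightarrow> real" where
  "H l = \<phi> l - l * deriv \<phi> l"

lemma integrable_exp_X:
  assumes "0 \<le> t" "0 \<le> l"
  shows "integrable M (\<lambda>\<omega>. exp (- l * X t \<omega>))"
proof -
  note [measurable] = measurable_X[OF assms(1)]
  show ?thesis
    using X_nonneg assms by (intro integrable_bounded[of _ 1]) (auto simp: mult_nonneg_nonneg)
qed

lemma integrable_X_exp:
  assumes "0 \<le> t" "0 < l"
  shows "integrable M (\<lambda>\<omega>. X t \<omega> * exp (- l * X t \<omega>))"
proof -
  note [measurable] = measurable_X[OF assms(1)]
  show ?thesis
    using X_nonneg assms mult_exp_minus_le by (intro integrable_bounded[of _ "1 / l"]) auto
qed

lemma integrable_gamma2_cdf_X:
  assumes "0 \<le> t" "0 \<le> l"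
  shows "integrable M (\<lambda>\<omega>. gamma2_cdf (l * X t \<omega>))"
proof -
  note [measurable] = measurable_X[OF assms(1)]
  show ?thesis
    using X_nonneg assms gamma2_cdf_nonneg gamma2_cdf_le_1
    by (intro integrable_bounded[of _ 1]) (auto simp: mult_nonneg_nonneg)
qed

lemma phi_has_real_derivative_aux:
  assumes l: "0 < l"
  shows "(\<phi> has_real_derivative (\<integral>\<omega>. X 1 \<omega> * exp (- l * X 1 \<omega>) \<partial>M) / exp (- \<phi> l)) (at l)"
proof -
  have L: "((\<lambda>l. \<integral>\<omega>. exp (- l * X 1 \<omega>) \<partial>M) has_real_derivative
      - (\<integral>\<omega>. X 1 \<omega> * exp (- l * X 1 \<omega>) \<partial>M)) (at l)"
    by (rule has_real_derivative_laplace_transform[OF measurable_X[of 1] X_nonneg[of 1] l]) simp_all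
  have "0 < (\<integral>\<omega>. exp (- l * X 1 \<omega>) \<partial>M)"
    using laplace_transform[of 1 l] l by simp
  from DERIV_minus[OF DERIV_chain2[OF DERIV_ln_divide[OF this] L]]
  have "((\<lambda>l. - ln (\<integral>\<omega>. exp (- l * X 1 \<omega>) \<partial>M)) has_real_derivative
      - (1 / (\<integral>\<omega>. exp (- l * X 1 \<omega>) \<partial>M) * - (\<integral>\<omega>. X 1 \<omega> * exp (- l * X 1 \<omega>) \<partial>M))) (at l)" .
  then have "((\<lambda>l. - ln (\<integral>\<omega>. exp (- l * X 1 \<omega>) \<partial>M)) has_real_derivative
      (\<integral>\<omega>. X 1 \<omega> * exp (- l * X 1 \<omega>) \<partial>M) / exp (- \<phi> l)) (at l)"
    using laplace_transform[of 1 l] l by simp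
  then show ?thesis
    by (rule has_field_derivative_transform_within_open[where S = "{0<..}"])
       (use l laplace_transform[of 1] in auto)
qed

lemma phi_has_real_derivative:
  assumes "0 < l"
  shows "(\<phi> has_real_derivative deriv \<phi> l) (at l)"
  using phi_has_real_derivative_aux[OF assms]
  unfolding DERIV_imp_deriv[OF phi_has_real_derivative_aux[OF assms]] .

lemma deriv_phi_nonneg:
  assumes l: "0 < l"
  shows "0 \<le> deriv \<phi> l"
proof -
  have "0 \<le> (\<integral>\<omega>. X 1 \<omega> * exp (- l * X 1 \<omega>) \<partial>M)"
    using X_nonneg[of 1] by (intro integral_nonneg_AE AE_I2) auto
  then show ?thesis
    using DERIV_imp_deriv[OF phi_has_real_derivative_aux[OF l]] by simp
qed

lemma phi_nonneg:
  assumes l: "0 < l"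
  shows "0 \<le> \<phi> l"
proof -
  have "\<bar>\<integral>\<omega>. exp (- l * X 1 \<omega>) \<partial>M\<bar> \<le> 1"
    using measurable_X[of 1] X_nonneg[of 1] l by (intro abs_integral_le_bound) auto
  then show ?thesis
    using laplace_transform[of 1 l] l by simp
qed

lemma expectation_X_exp:
  assumes t: "0 \<le> t" and l: "0 < l"
  shows "(\<integral>\<omega>. X t \<omega> * exp (- l * X t \<omega>) \<partial>M) = t * deriv \<phi> l * exp (- t * \<phi> l)"
proof -
  have "((\<lambda>l. exp (- t * \<phi> l)) has_real_derivative exp (- t * \<phi> l) * (- t * deriv \<phi> l)) (at l)"
    by (rule derivative_eq_intros refl phi_has_real_derivative[OF l])+ simp
  then have "((\<lambda>l. \<integral>\<omega>. exp (- l * X t \<omega>) \<partial>M) has_real_derivative exp (- t * \<phi> l) * (- t * deriv \<phi> l)) (at l)"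
    by (rule has_field_derivative_transform_within_open[where S = "{0<..}"])
       (use l t laplace_transform in auto)
  from DERIV_unique[OF has_real_derivative_laplace_transform[OF measurable_X[OF t] X_nonneg[OF t] l] this]
  show ?thesis by (simp add: algebra_simps)
qed

lemma expectation_gamma2_cdf:
  assumes t: "0 \<le> t" and l: "0 < l"
  shows "(\<integral>\<omega>. gamma2_cdf (l * X t \<omega>) \<partial>M) = 1 - exp (- t * \<phi> l) - t * l * deriv \<phi> l * exp (- t * \<phi> l)"
proof -
  have "(\<integral>\<omega>. gamma2_cdf (l * X t \<omega>) \<partial>M)
      = (\<integral>\<omega>. 1 - exp (- l * X t \<omega>) - l * (X t \<omega> * exp (- l * X t \<omega>)) \<partial>M)"
    by (simp add: gamma2_cdf_def algebra_simps)
  also have "\<dots> = 1 - (\<integral>\<omega>. exp (- l * X t \<omega>) \<partial>M) - l * (\<integral>\<omega>. X t \<omega> * exp (- l * X t \<omega>) \<partial>M)"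
    using integrable_exp_X[OF t, of l] integrable_X_exp[OF t l] l by (simp add: prob_space)
  finally show ?thesis
    using laplace_transform[OF t l] expectation_X_exp[OF t l] by simp
qed

lemma abs_expectation_gamma2_cdf_minus_le:
  assumes t: "0 \<le> t" and l: "0 < l" and H: "0 \<le> H l"
  shows "\<bar>(\<integral>\<omega>. gamma2_cdf (l * X t \<omega>) \<partial>M) - t * H l\<bar> \<le> 2 * (t * \<phi> l)\<^sup>2"
proof -
  have "0 \<le> t * (l * deriv \<phi> l)" "t * (l * deriv \<phi> l) \<le> t * \<phi> l"
    using t l H deriv_phi_nonneg[OF l] by (auto simp: H_def intro!: mult_left_mono)
  from abs_one_minus_exp_minus_le[OF this] show ?thesis
    using expectation_gamma2_cdf[OF t l] by (simp add: H_def algebra_simps)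
qed

lemma phi_mult_le:
  assumes H: "\<And>s. 0 < s \<Longrightarrow> 0 \<le> H s" and c: "1 \<le> c" and l: "0 < l"
  shows "\<phi> (c * l) \<le> c * \<phi> l"
proof -
  have "\<phi> (c * l) / (c * l) \<le> \<phi> l / l"
  proof (rule DERIV_nonpos_imp_nonincreasing[where f = "\<lambda>s. \<phi> s / s"])
    fix s assume s: "l \<le> s" "s \<le> c * l"
    then have "0 < s" using l by simp
    have "((\<lambda>s. \<phi> s / s) has_real_derivative - H s / s\<^sup>2) (at s)"
      using DERIV_divide[OF phi_has_real_derivative[OF \<open>0 < s\<close>] DERIV_ident] \<open>0 < s\<close>
      by (simp add: H_def power2_eq_square field_simps)
    moreover have "- H s / s\<^sup>2 \<le> 0"
      using H[OF \<open>0 < s\<close>] by simp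
    ultimately show "\<exists>y. ((\<lambda>s. \<phi> s / s) has_real_derivative y) (at s) \<and> y \<le> 0" by blast
  qed (use c l in simp)
  then show ?thesis using c l by (simp add: field_simps)
qed

lemma integrable_kernel_sum_X:
  "0 \<le> t \<Longrightarrow> 0 \<le> l \<Longrightarrow> integrable M (\<lambda>\<omega>. kernel_sum q m (l * X t \<omega>))"
  unfolding kernel_sum_def
  by (intro Bochner_Integration.integrable_sum integrable_mult_right)
     (simp add: mult.assoc[symmetric] integrable_gamma2_cdf_X)

lemma integral_kernel_sum:
  assumes "0 \<le> t" "0 \<le> l"
  shows "(\<integral>\<omega>. kernel_sum q m (l * X t \<omega>) \<partial>M)
    = (\<Sum>i\<le>m. q i * (\<integral>\<omega>. gamma2_cdf (((real i + 1) * l) * X t \<omega>) \<partial>M))"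
  unfolding kernel_sum_def using assms
  by (subst Bochner_Integration.integral_sum)
     (auto simp: mult.assoc[symmetric] integrable_gamma2_cdf_X)

lemma abs_integral_kernel_sum_minus_le:
  assumes H: "\<And>s. 0 < s \<Longrightarrow> 0 \<le> H s" and t: "0 \<le> t" and l: "0 < l"
  shows "\<bar>(\<integral>\<omega>. kernel_sum q m (l * X t \<omega>) \<partial>M) - t * (\<Sum>i\<le>m. q i * H ((real i + 1) * l))\<bar>
    \<le> 2 * (\<Sum>i\<le>m. \<bar>q i\<bar> * (real i + 1)\<^sup>2) * (t * \<phi> l)\<^sup>2"
proof -
  have term_le: "\<bar>q i * (\<integral>\<omega>. gamma2_cdf (((real i + 1) * l) * X t \<omega>) \<partial>M) - t * (q i * H ((real i + 1) * l))\<bar>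
      \<le> \<bar>q i\<bar> * (real i + 1)\<^sup>2 * (2 * (t * \<phi> l)\<^sup>2)" for i
  proof -
    define c where "c = real i + 1"
    have c: "1 \<le> c" "0 < c * l" using l by (auto simp: c_def)
    have "\<bar>(\<integral>\<omega>. gamma2_cdf ((c * l) * X t \<omega>) \<partial>M) - t * H (c * l)\<bar> \<le> 2 * (t * \<phi> (c * l))\<^sup>2"
      using abs_expectation_gamma2_cdf_minus_le[OF t c(2) H[OF c(2)]] .
    also have "\<dots> \<le> 2 * (c * (t * \<phi> l))\<^sup>2"
    proof -
      have "t * \<phi> (c * l) \<le> t * (c * \<phi> l)"
        using phi_mult_le[OF H c(1) l] t by (rule mult_left_mono)
      then show ?thesis
        using phi_nonneg[OF c(2)] t by (intro mult_left_mono power_mono) (auto simp: mult_ac)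
    qed
    finally have "\<bar>(\<integral>\<omega>. gamma2_cdf ((c * l) * X t \<omega>) \<partial>M) - t * H (c * l)\<bar> \<le> c\<^sup>2 * (2 * (t * \<phi> l)\<^sup>2)"
      by (simp add: power_mult_distrib)
    then have "\<bar>q i\<bar> * \<bar>(\<integral>\<omega>. gamma2_cdf ((c * l) * X t \<omega>) \<partial>M) - t * H (c * l)\<bar>
        \<le> \<bar>q i\<bar> * (c\<^sup>2 * (2 * (t * \<phi> l)\<^sup>2))"
      by (intro mult_left_mono) auto
    moreover have "\<bar>q i * (\<integral>\<omega>. gamma2_cdf ((c * l) * X t \<omega>) \<partial>M) - t * (q i * H (c * l))\<bar>
        = \<bar>q i\<bar> * \<bar>(\<integral>\<omega>. gamma2_cdf ((c * l) * X t \<omega>) \<partial>M) - t * H (c * l)\<bar>"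
      by (simp add: abs_mult[symmetric] algebra_simps)
    ultimately show ?thesis
      by (simp add: c_def mult.assoc)
  qed
  have "\<bar>(\<integral>\<omega>. kernel_sum q m (l * X t \<omega>) \<partial>M) - t * (\<Sum>i\<le>m. q i * H ((real i + 1) * l))\<bar>
      = \<bar>\<Sum>i\<le>m. q i * (\<integral>\<omega>. gamma2_cdf (((real i + 1) * l) * X t \<omega>) \<partial>M) - t * (q i * H ((real i + 1) * l))\<bar>"
    using t l by (simp add: integral_kernel_sum sum_distrib_left sum_subtractf)
  also have "\<dots> \<le> (\<Sum>i\<le>m. \<bar>q i\<bar> * (real i + 1)\<^sup>2 * (2 * (t * \<phi> l)\<^sup>2))"
    by (rule order_trans[OF sum_abs sum_mono[OF term_le]])
  also have "\<dots> = 2 * (\<Sum>i\<le>m. \<bar>q i\<bar> * (real i + 1)\<^sup>2) * (t * \<phi> l)\<^sup>2"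
    by (simp add: sum_distrib_left sum_distrib_right mult_ac)
  finally show ?thesis .
qed

lemma measure_ge_eq_integral_indicator:
  assumes t: "0 \<le> t" and r: "0 < r"
  shows "measure M {\<omega> \<in> space M. r \<le> X t \<omega>} = (\<integral>\<omega>. indicator {1..} (1 / r * X t \<omega>) \<partial>M)"
proof -
  note [measurable] = measurable_X[OF t]
  have "measure M {\<omega> \<in> space M. r \<le> X t \<omega>} = (\<integral>\<omega>. indicator {\<omega> \<in> space M. r \<le> X t \<omega>} \<omega> \<partial>M)"
    by (simp add: emeasure_eq_measure)
  also have "\<dots> = (\<integral>\<omega>. indicator {1..} (1 / r * X t \<omega>) \<partial>M)"
    using r by (intro Bochner_Integration.integral_cong) (auto simp: indicator_def field_simps)
  finally show ?thesis .
qed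

lemma measure_ge_le_integral_kernel_sum:
  assumes K: "\<And>x. 0 \<le> x \<Longrightarrow> indicator {1..} x \<le> kernel_sum q m x" and t: "0 \<le> t" and r: "0 < r"
  shows "measure M {\<omega> \<in> space M. r \<le> X t \<omega>} \<le> (\<integral>\<omega>. kernel_sum q m (1 / r * X t \<omega>) \<partial>M)"
  unfolding measure_ge_eq_integral_indicator[OF t r]
proof (rule integral_mono)
  note [measurable] = measurable_X[OF t]
  show "integrable M (\<lambda>\<omega>. indicator {1..} (1 / r * X t \<omega>) :: real)"
    by (intro integrable_bounded[of _ 1]) auto
  show "integrable M (\<lambda>\<omega>. kernel_sum q m (1 / r * X t \<omega>))"
    using t r by (intro integrable_kernel_sum_X) auto
qed (use K X_nonneg t r in auto)

lemma integral_kernel_sum_le_measure_ge: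
  assumes K: "\<And>x. 0 \<le> x \<Longrightarrow> kernel_sum q m x \<le> indicator {1..} x" and t: "0 \<le> t" and r: "0 < r"
  shows "(\<integral>\<omega>. kernel_sum q m (1 / r * X t \<omega>) \<partial>M) \<le> measure M {\<omega> \<in> space M. r \<le> X t \<omega>}"
  unfolding measure_ge_eq_integral_indicator[OF t r]
proof (rule integral_mono)
  note [measurable] = measurable_X[OF t]
  show "integrable M (\<lambda>\<omega>. indicator {1..} (1 / r * X t \<omega>) :: real)"
    by (intro integrable_bounded[of _ 1]) auto
  show "integrable M (\<lambda>\<omega>. kernel_sum q m (1 / r * X t \<omega>))"
    using t r by (intro integrable_kernel_sum_X) auto
qed (use K X_nonneg t r in auto)

lemma kernel_ratio_asymp:
  assumes H_pos: "\<And>s. 0 < s \<Longrightarrow> 0 < H s"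
    and H_ratio: "\<And>c. 0 < c \<Longrightarrow> ((\<lambda>r. H (c * (1 / r)) / H (1 / r)) \<longlongrightarrow> c powr \<gamma>) F"
    and \<epsilon>: "0 < \<epsilon>"
  obtains \<delta> where "0 < \<delta>"
    "\<forall>\<^sub>F r in F. \<forall>t>0. 0 < r \<longrightarrow> \<bar>t * \<phi> (1 / r)^2 / H (1 / r)\<bar> < \<delta> \<longrightarrow>
       \<bar>(\<integral>\<omega>. kernel_sum q m (1 / r * X t \<omega>) \<partial>M) / (t * H (1 / r))
         - (\<Sum>i\<le>m. q i * (real i + 1) powr \<gamma>)\<bar> < \<epsilon>"
proof -
  define C where "C = (\<Sum>i\<le>m. \<bar>q i\<bar> * (real i + 1)\<^sup>2)"
  have C: "0 \<le> C" unfolding C_def by (intro sum_nonneg) auto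
  define \<rho> where "\<rho> r = (\<Sum>i\<le>m. q i * (H ((real i + 1) * (1 / r)) / H (1 / r)))" for r
  have "(\<rho> \<longlongrightarrow> (\<Sum>i\<le>m. q i * (real i + 1) powr \<gamma>)) F"
    unfolding \<rho>_def by (intro tendsto_sum tendsto_mult_left H_ratio) auto
  then have ev: "\<forall>\<^sub>F r in F. dist (\<rho> r) (\<Sum>i\<le>m. q i * (real i + 1) powr \<gamma>) < \<epsilon> / 2"
    by (rule tendstoD) (use \<epsilon> in simp)
  define \<delta> where "\<delta> = \<epsilon> / (2 * (2 * C + 1))"
  have \<delta>: "0 < \<delta>" "2 * C * \<delta> < \<epsilon> / 2"
    using \<epsilon> C by (auto simp: \<delta>_def field_simps)
  show ?thesis
  proof (rule that[OF \<delta>(1)], rule eventually_mono[OF ev], intro allI impI)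
    fix r t assume \<rho>: "dist (\<rho> r) (\<Sum>i\<le>m. q i * (real i + 1) powr \<gamma>) < \<epsilon> / 2"
      and t: "0 < t" and r: "0 < r" and small: "\<bar>t * \<phi> (1 / r)^2 / H (1 / r)\<bar> < \<delta>"
    define N where "N = t * H (1 / r)"
    have N: "0 < N" using t r H_pos[of "1 / r"] by (simp add: N_def)
    have "t * (\<Sum>i\<le>m. q i * H ((real i + 1) * (1 / r))) = N * \<rho> r"
      using H_pos[of "1 / r"] r by (simp add: N_def \<rho>_def sum_distrib_left field_simps)
    with abs_integral_kernel_sum_minus_le[of t "1 / r" q m] H_pos t r
    have "\<bar>(\<integral>\<omega>. kernel_sum q m (1 / r * X t \<omega>) \<partial>M) - N * \<rho> r\<bar> \<le> 2 * C * (t * \<phi> (1 / r))\<^sup>2"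
      by (simp add: C_def less_imp_le)
    moreover have "(\<integral>\<omega>. kernel_sum q m (1 / r * X t \<omega>) \<partial>M) / N - \<rho> r
        = ((\<integral>\<omega>. kernel_sum q m (1 / r * X t \<omega>) \<partial>M) - N * \<rho> r) / N"
      using N by (simp add: field_simps)
    ultimately have "\<bar>(\<integral>\<omega>. kernel_sum q m (1 / r * X t \<omega>) \<partial>M) / N - \<rho> r\<bar> \<le> 2 * C * (t * \<phi> (1 / r))\<^sup>2 / N"
      using N by (simp add: divide_right_mono abs_divide)
    also have "\<dots> = 2 * C * \<bar>t * \<phi> (1 / r)^2 / H (1 / r)\<bar>"
      using H_pos[of "1 / r"] r t by (simp add: N_def power2_eq_square abs_of_nonneg mult_ac)
    also have "\<dots> \<le> 2 * C * \<delta>"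
      using small C by (intro mult_left_mono) auto
    finally show "\<bar>(\<integral>\<omega>. kernel_sum q m (1 / r * X t \<omega>) \<partial>M) / (t * H (1 / r))
        - (\<Sum>i\<le>m. q i * (real i + 1) powr \<gamma>)\<bar> < \<epsilon>"
      using \<rho> \<delta>(2) unfolding N_def dist_real_def abs_le_iff abs_less_iff by linarith
  qed
qed

lemma tail_ratio_upper:
  assumes \<gamma>: "0 \<le> \<gamma>" "\<gamma> < 2"
    and H_pos: "\<And>s. 0 < s \<Longrightarrow> 0 < H s"
    and H_ratio: "\<And>c. 0 < c \<Longrightarrow> ((\<lambda>r. H (c * (1 / r)) / H (1 / r)) \<longlongrightarrow> c powr \<gamma>) F"
    and \<epsilon>: "0 < \<epsilon>"
  obtains \<delta> where "0 < \<delta>"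
    "\<forall>\<^sub>F r in F. \<forall>t>0. 0 < r \<longrightarrow> \<bar>t * \<phi> (1 / r)^2 / H (1 / r)\<bar> < \<delta> \<longrightarrow>
       measure M {\<omega> \<in> space M. r \<le> X t \<omega>} / (t * H (1 / r)) < 1 / Gamma (2 - \<gamma>) + \<epsilon>"
proof -
  obtain q m where K: "\<And>x. 0 \<le> x \<Longrightarrow> indicator {1..} x \<le> kernel_sum q m x"
    and S: "(\<Sum>i\<le>m. q i * (real i + 1) powr \<gamma>) \<le> 1 / Gamma (2 - \<gamma>) + \<epsilon> / 2"
    using kernel_sum_majorant[OF \<gamma>, of "\<epsilon> / 2"] \<epsilon> by auto
  obtain \<delta> where "0 < \<delta>" and \<delta>: "\<forall>\<^sub>F r in F. \<forall>t>0. 0 < r \<longrightarrow> \<bar>t * \<phi> (1 / r)^2 / H (1 / r)\<bar> < \<delta> \<longrightarrow>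
      \<bar>(\<integral>\<omega>. kernel_sum q m (1 / r * X t \<omega>) \<partial>M) / (t * H (1 / r))
        - (\<Sum>i\<le>m. q i * (real i + 1) powr \<gamma>)\<bar> < \<epsilon> / 2"
    using kernel_ratio_asymp[OF H_pos H_ratio, of "\<epsilon> / 2"] \<epsilon> by auto
  show ?thesis
  proof (rule that[OF \<open>0 < \<delta>\<close>], rule eventually_mono[OF \<delta>], intro allI impI)
    fix r t assume "\<forall>t>0. 0 < r \<longrightarrow> \<bar>t * \<phi> (1 / r)^2 / H (1 / r)\<bar> < \<delta> \<longrightarrow>
        \<bar>(\<integral>\<omega>. kernel_sum q m (1 / r * X t \<omega>) \<partial>M) / (t * H (1 / r))
          - (\<Sum>i\<le>m. q i * (real i + 1) powr \<gamma>)\<bar> < \<epsilon> / 2"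
      and t: "0 < t" and r: "0 < r" and "\<bar>t * \<phi> (1 / r)^2 / H (1 / r)\<bar> < \<delta>"
    then have close: "\<bar>(\<integral>\<omega>. kernel_sum q m (1 / r * X t \<omega>) \<partial>M) / (t * H (1 / r))
        - (\<Sum>i\<le>m. q i * (real i + 1) powr \<gamma>)\<bar> < \<epsilon> / 2"
      by blast
    have "measure M {\<omega> \<in> space M. r \<le> X t \<omega>} / (t * H (1 / r))
        \<le> (\<integral>\<omega>. kernel_sum q m (1 / r * X t \<omega>) \<partial>M) / (t * H (1 / r))"
      using measure_ge_le_integral_kernel_sum[OF K, of t r] t r H_pos[of "1 / r"]
      by (intro divide_right_mono) auto
    then show "measure M {\<omega> \<in> space M. r \<le> X t \<omega>} / (t * H (1 / r)) < 1 / Gamma (2 - \<gamma>) + \<epsilon>"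
      using close S unfolding abs_less_iff by linarith
  qed
qed

lemma tail_ratio_lower:
  assumes \<gamma>: "0 \<le> \<gamma>" "\<gamma> < 2"
    and H_pos: "\<And>s. 0 < s \<Longrightarrow> 0 < H s"
    and H_ratio: "\<And>c. 0 < c \<Longrightarrow> ((\<lambda>r. H (c * (1 / r)) / H (1 / r)) \<longlongrightarrow> c powr \<gamma>) F"
    and \<epsilon>: "0 < \<epsilon>"
  obtains \<delta> where "0 < \<delta>"
    "\<forall>\<^sub>F r in F. \<forall>t>0. 0 < r \<longrightarrow> \<bar>t * \<phi> (1 / r)^2 / H (1 / r)\<bar> < \<delta> \<longrightarrow>
       1 / Gamma (2 - \<gamma>) - \<epsilon> < measure M {\<omega> \<in> space M. r \<le> X t \<omega>} / (t * H (1 / r))"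
proof -
  obtain q m where K: "\<And>x. 0 \<le> x \<Longrightarrow> kernel_sum q m x \<le> indicator {1..} x"
    and S: "1 / Gamma (2 - \<gamma>) - \<epsilon> / 2 \<le> (\<Sum>i\<le>m. q i * (real i + 1) powr \<gamma>)"
    using kernel_sum_minorant[OF \<gamma>, of "\<epsilon> / 2"] \<epsilon> by auto
  obtain \<delta> where "0 < \<delta>" and \<delta>: "\<forall>\<^sub>F r in F. \<forall>t>0. 0 < r \<longrightarrow> \<bar>t * \<phi> (1 / r)^2 / H (1 / r)\<bar> < \<delta> \<longrightarrow>
      \<bar>(\<integral>\<omega>. kernel_sum q m (1 / r * X t \<omega>) \<partial>M) / (t * H (1 / r))
        - (\<Sum>i\<le>m. q i * (real i + 1) powr \<gamma>)\<bar> < \<epsilon> / 2"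
    using kernel_ratio_asymp[OF H_pos H_ratio, of "\<epsilon> / 2"] \<epsilon> by auto
  show ?thesis
  proof (rule that[OF \<open>0 < \<delta>\<close>], rule eventually_mono[OF \<delta>], intro allI impI)
    fix r t assume "\<forall>t>0. 0 < r \<longrightarrow> \<bar>t * \<phi> (1 / r)^2 / H (1 / r)\<bar> < \<delta> \<longrightarrow>
        \<bar>(\<integral>\<omega>. kernel_sum q m (1 / r * X t \<omega>) \<partial>M) / (t * H (1 / r))
          - (\<Sum>i\<le>m. q i * (real i + 1) powr \<gamma>)\<bar> < \<epsilon> / 2"
      and t: "0 < t" and r: "0 < r" and "\<bar>t * \<phi> (1 / r)^2 / H (1 / r)\<bar> < \<delta>"
    then have close: "\<bar>(\<integral>\<omega>. kernel_sum q m (1 / r * X t \<omega>) \<partial>M) / (t * H (1 / r))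
        - (\<Sum>i\<le>m. q i * (real i + 1) powr \<gamma>)\<bar> < \<epsilon> / 2"
      by blast
    have "(\<integral>\<omega>. kernel_sum q m (1 / r * X t \<omega>) \<partial>M) / (t * H (1 / r))
        \<le> measure M {\<omega> \<in> space M. r \<le> X t \<omega>} / (t * H (1 / r))"
      using integral_kernel_sum_le_measure_ge[OF K, of t r] t r H_pos[of "1 / r"]
      by (intro divide_right_mono) auto
    then show "1 / Gamma (2 - \<gamma>) - \<epsilon> < measure M {\<omega> \<in> space M. r \<le> X t \<omega>} / (t * H (1 / r))"
      using close S unfolding abs_less_iff by linarith
  qed
qed

theorem tail_asymptotics:
  assumes \<gamma>: "0 \<le> \<gamma>" "\<gamma> < 2"
    and H_pos: "\<And>s. 0 < s \<Longrightarrow> 0 < H s"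
    and H_ratio: "\<And>c. 0 < c \<Longrightarrow> ((\<lambda>r. H (c * (1 / r)) / H (1 / r)) \<longlongrightarrow> c powr \<gamma>) F"
  shows "joint_asymp F (\<lambda>t r. measure M {\<omega> \<in> space M. X t \<omega> \<ge> r})
    (\<lambda>t r. 1 / Gamma (2 - \<gamma>) * t * H (1 / r)) (\<lambda>t r. t * \<phi> (1 / r)^2 / H (1 / r))"
  unfolding joint_asymp_def
proof (intro allI impI)
  fix \<epsilon> :: real assume "0 < \<epsilon>"
  define G where "G = Gamma (2 - \<gamma>)"
  have G: "0 < G" using \<gamma> by (simp add: G_def Gamma_real_pos)
  with \<open>0 < \<epsilon>\<close> have "0 < \<epsilon> / G" by simp
  obtain \<delta>U where "0 < \<delta>U" and upper: "\<forall>\<^sub>F r in F. \<forall>t>0. 0 < r \<longrightarrow> \<bar>t * \<phi> (1 / r)^2 / H (1 / r)\<bar> < \<delta>U \<longrightarrow>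
      measure M {\<omega> \<in> space M. r \<le> X t \<omega>} / (t * H (1 / r)) < 1 / G + \<epsilon> / G"
    using tail_ratio_upper[OF \<gamma> H_pos H_ratio \<open>0 < \<epsilon> / G\<close>] unfolding G_def by blast
  obtain \<delta>L where "0 < \<delta>L" and lower: "\<forall>\<^sub>F r in F. \<forall>t>0. 0 < r \<longrightarrow> \<bar>t * \<phi> (1 / r)^2 / H (1 / r)\<bar> < \<delta>L \<longrightarrow>
      1 / G - \<epsilon> / G < measure M {\<omega> \<in> space M. r \<le> X t \<omega>} / (t * H (1 / r))"
    using tail_ratio_lower[OF \<gamma> H_pos H_ratio \<open>0 < \<epsilon> / G\<close>] unfolding G_def by blast
  show "\<exists>\<delta>>0. \<forall>\<^sub>F r in F. \<forall>t>0. 0 < r \<longrightarrow> \<bar>t * \<phi> (1 / r)^2 / H (1 / r)\<bar> < \<delta> \<longrightarrow>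
      \<bar>measure M {\<omega> \<in> space M. r \<le> X t \<omega>} / (1 / Gamma (2 - \<gamma>) * t * H (1 / r)) - 1\<bar> < \<epsilon>"
  proof (intro exI conjI)
    show "0 < min \<delta>U \<delta>L" using \<open>0 < \<delta>U\<close> \<open>0 < \<delta>L\<close> by simp
    show "\<forall>\<^sub>F r in F. \<forall>t>0. 0 < r \<longrightarrow> \<bar>t * \<phi> (1 / r)^2 / H (1 / r)\<bar> < min \<delta>U \<delta>L \<longrightarrow>
      \<bar>measure M {\<omega> \<in> space M. r \<le> X t \<omega>} / (1 / Gamma (2 - \<gamma>) * t * H (1 / r)) - 1\<bar> < \<epsilon>"
    proof (rule eventually_mono[OF eventually_conj[OF upper lower]], intro allI impI)
      fix r t assume bounds: "(\<forall>t>0. 0 < r \<longrightarrow> \<bar>t * \<phi> (1 / r)^2 / H (1 / r)\<bar> < \<delta>U \<longrightarrow>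
          measure M {\<omega> \<in> space M. r \<le> X t \<omega>} / (t * H (1 / r)) < 1 / G + \<epsilon> / G)
        \<and> (\<forall>t>0. 0 < r \<longrightarrow> \<bar>t * \<phi> (1 / r)^2 / H (1 / r)\<bar> < \<delta>L \<longrightarrow>
          1 / G - \<epsilon> / G < measure M {\<omega> \<in> space M. r \<le> X t \<omega>} / (t * H (1 / r)))"
        and t: "0 < t" and r: "0 < r" and small: "\<bar>t * \<phi> (1 / r)^2 / H (1 / r)\<bar> < min \<delta>U \<delta>L"
      have "measure M {\<omega> \<in> space M. r \<le> X t \<omega>} / (t * H (1 / r)) < 1 / G + \<epsilon> / G"
        using bounds t r small by simp
      moreover have "1 / G - \<epsilon> / G < measure M {\<omega> \<in> space M. r \<le> X t \<omega>} / (t * H (1 / r))"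
        using bounds t r small by simp
      ultimately have "\<bar>measure M {\<omega> \<in> space M. r \<le> X t \<omega>} / (t * H (1 / r)) - 1 / G\<bar> < \<epsilon> / G"
        by (simp only: abs_less_iff) linarith
      then have "G * \<bar>measure M {\<omega> \<in> space M. r \<le> X t \<omega>} / (t * H (1 / r)) - 1 / G\<bar> < \<epsilon>"
        using G by (simp add: field_simps)
      moreover have "measure M {\<omega> \<in> space M. r \<le> X t \<omega>} / (1 / Gamma (2 - \<gamma>) * t * H (1 / r)) - 1
          = G * (measure M {\<omega> \<in> space M. r \<le> X t \<omega>} / (t * H (1 / r)) - 1 / G)"
        using G by (simp add: G_def field_simps)
      ultimately show "\<bar>measure M {\<omega> \<in> space M. r \<le> X t \<omega>} / (1 / Gamma (2 - \<gamma>) * t * H (1 / r)) - 1\<bar> < \<epsilon>"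
        using G by (simp add: abs_mult)
    qed
  qed
qed

end

lemma laplace_family_subordinator:
  assumes "subordinator M T" "laplace_exponent M T \<phi>"
  shows "laplace_family M T \<phi>"
proof -
  have paths: "T 0 \<omega> = 0" "mono_on {0..} (\<lambda>t. T t \<omega>)" if "\<omega> \<in> space M" for \<omega>
    using assms(1) that unfolding subordinator_def by auto
  interpret prob_space M
    using assms(1) by (simp add: subordinator_def)
  show ?thesis
  proof
    show "T t \<in> borel_measurable M" if "0 \<le> t" for t
      using assms(1) that by (simp add: subordinator_def)
    show "0 \<le> T t \<omega>" if "0 \<le> t" "\<omega> \<in> space M" for t \<omega>
      using paths[OF that(2)] mono_onD[of "{0..}" "\<lambda>t. T t \<omega>" 0 t] that(1) by auto
    show "(\<integral>\<omega>. exp (- l * T t \<omega>) \<partial>M) = exp (- t * \<phi> l)" if "0 \<le> t" "0 < l" for t l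
      using assms(2) that by (simp add: laplace_exponent_def)
  qed
qed

theorem theorem1p1:
  fixes M :: "'a measure" and T :: "real \<Rightarrow> 'a \<Rightarrow> real"
    and \<phi> :: "real \<Rightarrow> real" and \<gamma> :: real
  defines "H \<equiv> (\<lambda>x. \<phi> x - x * deriv \<phi> x)"
  assumes sub: "subordinator M T"
    and lap: "laplace_exponent M T \<phi>"
    and \<gamma>: "0 \<le> \<gamma>" "\<gamma> < 2"
  shows "(regularly_varying (at_right 0) H \<gamma> \<longrightarrow>
           joint_asymp at_top
             (\<lambda>t r. measure M {\<omega> \<in> space M. T t \<omega> \<ge> r})
             (\<lambda>t r. 1 / Gamma (2 - \<gamma>) * t * H (1 / r))
             (\<lambda>t r. t * \<phi> (1 / r)^2 / H (1 / r)))
       \<and> (regularly_varying at_top H \<gamma> \<longrightarrow>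
           joint_asymp (at_right 0)
             (\<lambda>t r. measure M {\<omega> \<in> space M. T t \<omega> \<ge> r})
             (\<lambda>t r. 1 / Gamma (2 - \<gamma>) * t * H (1 / r))
             (\<lambda>t r. t * \<phi> (1 / r)^2 / H (1 / r)))"
proof -
  have H_eq: "H = laplace_family.H \<phi>"
    unfolding H_def
    by (simp add: fun_eq_iff laplace_family.H_def[OF laplace_family_subordinator[OF sub lap]])
  interpret laplace_family M T \<phi>
    using laplace_family_subordinator[OF sub lap] .
  have "joint_asymp G (\<lambda>t r. measure M {\<omega> \<in> space M. T t \<omega> \<ge> r})
      (\<lambda>t r. 1 / Gamma (2 - \<gamma>) * t * H (1 / r)) (\<lambda>t r. t * \<phi> (1 / r)^2 / H (1 / r))"
    if RV: "regularly_varying F H \<gamma>" and G: "filterlim (\<lambda>r. 1 / r) F G" for F G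
  proof (unfold H_eq, rule tail_asymptotics[OF \<gamma>])
    show "0 < laplace_family.H \<phi> s" if "0 < s" for s
      using RV that unfolding regularly_varying_def H_eq by blast
    show "((\<lambda>r. laplace_family.H \<phi> (c * (1 / r)) / laplace_family.H \<phi> (1 / r)) \<longlongrightarrow> c powr \<gamma>) G"
      if "0 < c" for c
      using filterlim_compose[OF _ G] RV that unfolding regularly_varying_def H_eq by blast
  qed
  moreover have "filterlim (\<lambda>r::real. 1 / r) (at_right 0) at_top"
    and "filterlim (\<lambda>r::real. 1 / r) at_top (at_right 0)"
    using filterlim_inverse_at_right_top filterlim_inverse_at_top_right by (simp_all add: inverse_eq_divide)
  ultimately show ?thesis by blast
qed

end
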